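(* Let $X$ be a Baire space, $Y$ a topological space, $(Z,d)$ a metric space and $f:X\times Y\to Z$ a mapping. Suppose that each $y\in Y$ has a neighborhood with a countable pseudobase, and that one of the following holds: (i) for each $x\in X$, $f_x$ is quasicontinuous and there is a dense set $D_x\subset Y$ such that $f^y$ is quasicontinuous at $x$ for every $y\in D_x$; (ii) for each $y\in Y$, $f^y$ is quasicontinuous and there is a dense Baire subspace $Q_y\subset X$ such that $f_x$ is quasicontinuous at $y$ for every $x\in Q_y$. Then $f$ is quasicontinuous (as a mapping on $X\times Y$ with the product topology).
   Context: $f_x(y)=f^y(x)=f(x,y)$. A mapping $g:T\to Z$ is quasicontinuous at $t$ if for each neighborhood $U$ of $t$ and each neighborhood $W$ of $g(t)$ there is an open $O$ with $\emptyset\ne O\subset U$ and $g(O)\subset W$; quasicontinuous means at every point. A pseudobase of a space is a collection of nonempty open sets such that every nonempty open set contains one of them. *)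

theory Defs
  imports "HOL-Analysis.Analysis"
begin

definition Baire_space :: "'a topology \<Rightarrow> bool" where
  "Baire_space T \<longleftrightarrow>
     (\<forall>\<G>. countable \<G> \<and> (\<forall>G\<in>\<G>. openin T G \<and> T closure_of G = topspace T)
        \<longrightarrow> T closure_of (topspace T \<inter> \<Inter>\<G>) = topspace T)"

definition quasicontinuous_at :: "'a topology \<Rightarrow> ('a \<Rightarrow> 'c::metric_space) \<Rightarrow> 'a \<Rightarrow> bool" where
  "quasicontinuous_at T g t \<longleftrightarrow>
     (\<forall>U W. openin T U \<and> t \<in> U \<and> open W \<and> g t \<in> W \<longrightarrow>
        (\<exists>V. openin T V \<and> V \<noteq> {} \<and> V \<subseteq> U \<and> g ` V \<subseteq> W))"

definition quasicontinuous :: "'a topology \<Rightarrow> ('a \<Rightarrow> 'c::metric_space) \<Rightarrow> bool" where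
  "quasicontinuous T g \<longleftrightarrow> (\<forall>t\<in>topspace T. quasicontinuous_at T g t)"

definition pseudobase :: "'a topology \<Rightarrow> 'a set set \<Rightarrow> bool" where
  "pseudobase T \<P> \<longleftrightarrow>
     (\<forall>P\<in>\<P>. openin T P \<and> P \<noteq> {}) \<and>
     (\<forall>U. openin T U \<and> U \<noteq> {} \<longrightarrow> (\<exists>P\<in>\<P>. P \<subseteq> U))"

end

theory Submission
  imports Defs
begin

(* By a box criterion it suffices to find, inside any basic neighbourhood U \<times> V of (x0,y0)
   and for any e > 0, a nonempty open box G \<times> H on which f is e-close to f(x0,y0).
   The common mechanism in both cases is:
   - using quasicontinuity of the sections f_x in y, every x of a nonempty open U1 \<subseteq> U
     (or of U1 \<inter> Q) lies in one of countably many sets A P, indexed by the members P of a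
     countable pseudobase near y0, where A P collects the x with f(x,-) close to the target
     value on all of P;
   - the Baire property localises this cover: some A P is dense in a nonempty open G \<subseteq> U1;
   - quasicontinuity of the sections f^y in x (and, in case (i), of f_x in y together with
     the dense sets D_x) carries the estimate from the dense set A P to all of G \<times> P.
   The file first develops the general tools (density inside an open set and the transfer of
   bounds along it, Baire localisation, restriction of pseudobases, the box criterion), then
   the covering and transfer steps, then the two cases, and finally the theorem, which just
   applies the box criterion and splits into the two cases. *)

definition dense_within :: "'a topology \<Rightarrow> 'a set \<Rightarrow> 'a set \<Rightarrow> bool" where
  "dense_within T S G \<longleftrightarrow> (\<forall>W. openin T W \<and> W \<noteq> {} \<and> W \<subseteq> G \<longrightarrow> W \<inter> S \<noteq> {})"

lemma dense_imp_dense_within: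
  assumes "T closure_of S = topspace T"
  shows "dense_within T S G"
  using assms unfolding dense_within_def dense_intersects_open by blast

lemma quasicontinuous_at_dist:
  fixes g :: "'a \<Rightarrow> 'c::metric_space"
  assumes "quasicontinuous_at T g t" "openin T U" "t \<in> U" "r > 0"
  obtains V where "openin T V" "V \<noteq> {}" "V \<subseteq> U" "\<forall>v\<in>V. dist (g v) (g t) < r"
proof -
  obtain V where V: "openin T V" "V \<noteq> {}" "V \<subseteq> U" "g ` V \<subseteq> ball (g t) r"
    using assms unfolding quasicontinuous_at_def by (meson centre_in_ball open_ball)
  then have "\<forall>v\<in>V. dist (g v) (g t) < r"
    by (auto simp: dist_commute)
  with V that show ?thesis by blast
qed

lemma quasicontinuous_at_dense_bound:
  fixes g :: "'a \<Rightarrow> 'c::metric_space"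
  assumes qc: "quasicontinuous_at T g t" and G: "openin T G" "t \<in> G"
    and dense: "dense_within T S G" and bound: "\<forall>s\<in>S \<inter> G. dist (g s) c \<le> a"
  shows "dist (g t) c \<le> a"
proof (rule field_le_epsilon)
  fix r :: real assume "0 < r"
  then obtain W where W: "openin T W" "W \<noteq> {}" "W \<subseteq> G" "\<forall>w\<in>W. dist (g w) (g t) < r"
    using quasicontinuous_at_dist[OF qc G] by blast
  then obtain s where s: "s \<in> W" "s \<in> S"
    using dense unfolding dense_within_def by blast
  have "dist (g t) c \<le> dist (g s) (g t) + dist (g s) c"
    by (rule dist_triangle3)
  also have "\<dots> \<le> r + a"
    using W s bound by (intro add_mono) auto
  finally show "dist (g t) c \<le> a + r" by simp
qed

lemma baire_localization:
  assumes baire: "Baire_space T" and count: "countable \<P>"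
    and U: "openin T U" "U \<noteq> {}" and cover: "U \<subseteq> (\<Union>P\<in>\<P>. A P)"
  shows "\<exists>P\<in>\<P>. \<exists>G. openin T G \<and> G \<noteq> {} \<and> G \<subseteq> U \<and> dense_within T (A P) G"
proof (rule ccontr)
  assume "\<not> ?thesis"
  then have nowhere: "\<exists>W. openin T W \<and> W \<noteq> {} \<and> W \<subseteq> G \<and> W \<inter> A P = {}"
    if "P \<in> \<P>" "openin T G" "G \<noteq> {}" "G \<subseteq> U" for P G
    using that unfolding dense_within_def by auto
  text \<open>Removing the closure of each \<open>A P\<close> inside \<open>U\<close> leaves an open dense set.\<close>
  define R where "R P = topspace T - (T closure_of A P \<inter> T closure_of U)" for P
  have R_open: "openin T (R P)" for P
    unfolding R_def by (intro openin_diff openin_topspace closedin_Int closedin_closure_of)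
  have R_dense: "T closure_of R P = topspace T" if P: "P \<in> \<P>" for P
    unfolding dense_intersects_open
  proof (intro allI impI notI)
    fix W assume W: "openin T W \<and> W \<noteq> {}" and "R P \<inter> W = {}"
    then have W_sub: "W \<subseteq> T closure_of A P" "W \<subseteq> T closure_of U"
      using openin_subset[of T W] unfolding R_def by blast+
    then have "W \<inter> U \<noteq> {}"
      using W openin_Int_closure_of_eq_empty[of T W U] by blast
    moreover have "openin T (W \<inter> U)"
      using W U(1) by (simp add: openin_Int)
    ultimately obtain W' where "openin T W'" "W' \<noteq> {}" "W' \<subseteq> W" "W' \<inter> A P = {}"
      using nowhere[OF P, of "W \<inter> U"] by blast
    then show False
      using W_sub(1) openin_Int_closure_of_eq_empty[of T W' "A P"] by blast
  qed
  have "T closure_of (topspace T \<inter> \<Inter>(R ` \<P>)) = topspace T"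
    using baire count R_open R_dense unfolding Baire_space_def by auto
  then obtain x where x: "x \<in> U" "\<forall>P\<in>\<P>. x \<in> R P"
    using U unfolding dense_intersects_open by blast
  then obtain P where "P \<in> \<P>" "x \<in> A P"
    using cover by blast
  moreover have "x \<in> topspace T"
    using x U openin_subset by blast
  ultimately have "x \<in> T closure_of A P \<inter> T closure_of U"
    using x(1) by (auto simp: in_closure_of)
  then show False
    using x(2) \<open>P \<in> \<P>\<close> unfolding R_def by blast
qed

lemma dense_baire_subspace_localization:
  assumes Q: "X closure_of Q = topspace X" "Baire_space (subtopology X Q)"
    and count: "countable \<P>" and U: "openin X U" "U \<noteq> {}"
    and cover: "U \<inter> Q \<subseteq> (\<Union>P\<in>\<P>. A P)"
  shows "\<exists>P\<in>\<P>. \<exists>G. openin X G \<and> G \<noteq> {} \<and> G \<subseteq> U \<and> dense_within X (A P) G"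
proof -
  have "openin (subtopology X Q) (U \<inter> Q)" "U \<inter> Q \<noteq> {}"
    using openin_subtopology_Int[OF U(1)] Q(1) U unfolding dense_intersects_open by blast+
  then obtain P R where P: "P \<in> \<P>" and R: "openin (subtopology X Q) R" "R \<noteq> {}" "R \<subseteq> U \<inter> Q"
    and dense_S: "dense_within (subtopology X Q) (A P) R"
    using baire_localization[OF Q(2) count _ _ cover] by blast
  obtain G0 where G0: "openin X G0" "R = G0 \<inter> Q"
    using R(1) by (auto simp: openin_subtopology)
  have "dense_within X (A P) (G0 \<inter> U)"
    unfolding dense_within_def
  proof (intro allI impI)
    fix W assume W: "openin X W \<and> W \<noteq> {} \<and> W \<subseteq> G0 \<inter> U"
    then have "openin (subtopology X Q) (W \<inter> Q)" "W \<inter> Q \<noteq> {}" "W \<inter> Q \<subseteq> R"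
      using openin_subtopology_Int Q(1) G0(2) unfolding dense_intersects_open by blast+
    then show "W \<inter> A P \<noteq> {}"
      using dense_S unfolding dense_within_def by blast
  qed
  moreover have "openin X (G0 \<inter> U)" "G0 \<inter> U \<noteq> {}"
    using G0 U R by auto
  ultimately show ?thesis
    using P by blast
qed

lemma pseudobase_restrict:
  assumes pb: "pseudobase (subtopology Y N) \<P>" and V: "openin Y V" "V \<subseteq> N"
  shows "pseudobase (subtopology Y V) {P\<in>\<P>. P \<subseteq> V}"
proof -
  have members: "\<forall>P\<in>{P\<in>\<P>. P \<subseteq> V}. openin (subtopology Y V) P \<and> P \<noteq> {}"
  proof
    fix P assume P: "P \<in> {P\<in>\<P>. P \<subseteq> V}"
    then have "openin (subtopology Y N) P" "P \<noteq> {}"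
      using pb unfolding pseudobase_def by auto
    then obtain S where S: "openin Y S" "P = S \<inter> N"
      by (auto simp: openin_subtopology)
    then have "P = S \<inter> V"
      using P V(2) by blast
    then have "openin Y P"
      using S(1) V(1) by (simp add: openin_Int)
    with P \<open>P \<noteq> {}\<close> show "openin (subtopology Y V) P \<and> P \<noteq> {}"
      by (simp add: openin_open_subtopology[OF V(1)])
  qed
  have covers: "\<forall>W. openin (subtopology Y V) W \<and> W \<noteq> {} \<longrightarrow> (\<exists>P\<in>{P\<in>\<P>. P \<subseteq> V}. P \<subseteq> W)"
  proof (intro allI impI)
    fix W assume W: "openin (subtopology Y V) W \<and> W \<noteq> {}"
    then have "openin Y W" "W \<subseteq> V"
      by (simp_all add: openin_open_subtopology[OF V(1)])
    moreover have "N \<inter> W = W"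
      using \<open>W \<subseteq> V\<close> V(2) by blast
    ultimately have "openin (subtopology Y N) W"
      using openin_subtopology_Int2[of Y W N] by simp
    then obtain P where "P \<in> \<P>" "P \<subseteq> W"
      using pb W unfolding pseudobase_def by blast
    with \<open>W \<subseteq> V\<close> show "\<exists>P\<in>{P\<in>\<P>. P \<subseteq> V}. P \<subseteq> W"
      by blast
  qed
  from members covers show ?thesis
    unfolding pseudobase_def by blast
qed

lemma pseudobase_member:
  assumes "pseudobase (subtopology Y V) \<P>" "openin Y V" "P \<in> \<P>"
  shows "openin Y P" "P \<noteq> {}" "P \<subseteq> V"
  using assms unfolding pseudobase_def openin_open_subtopology[OF assms(2)] by auto

lemma local_countable_pseudobase:
  assumes "\<exists>N. (\<exists>V. openin Y V \<and> y \<in> V \<and> V \<subseteq> N) \<and> N \<subseteq> topspace Y \<and>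
             (\<exists>\<P>. countable \<P> \<and> pseudobase (subtopology Y N) \<P>)"
  obtains V \<P> where "openin Y V" "y \<in> V" "countable \<P>" "pseudobase (subtopology Y V) \<P>"
proof -
  obtain N V \<P> where V: "openin Y V" "y \<in> V" "V \<subseteq> N"
    and \<P>: "countable \<P>" "pseudobase (subtopology Y N) \<P>"
    using assms by blast
  have "countable {P\<in>\<P>. P \<subseteq> V}"
    using \<P>(1) by simp
  with V \<P> pseudobase_restrict that show ?thesis by blast
qed

lemma pseudobase_quasicontinuous_select:
  fixes g :: "'b \<Rightarrow> 'c::metric_space"
  assumes pb: "pseudobase (subtopology Y V) \<P>" and V: "openin Y V" "y \<in> V"
    and qc: "quasicontinuous_at Y g y" and r: "r > 0"
  obtains P where "P \<in> \<P>" "\<forall>z\<in>P. dist (g z) (g y) < r"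
proof -
  obtain W where W: "openin Y W" "W \<noteq> {}" "W \<subseteq> V" "\<forall>z\<in>W. dist (g z) (g y) < r"
    using quasicontinuous_at_dist[OF qc V r] by blast
  then obtain P where "P \<in> \<P>" "P \<subseteq> W"
    using pb unfolding pseudobase_def openin_open_subtopology[OF V(1)] by blast
  with W that show ?thesis by blast
qed

lemma quasicontinuous_at_prod_boxI:
  fixes f :: "'a \<times> 'b \<Rightarrow> 'c::metric_space"
  assumes boxes: "\<And>U V e. openin X U \<Longrightarrow> openin Y V \<Longrightarrow> x0 \<in> U \<Longrightarrow> y0 \<in> V \<Longrightarrow> e > 0 \<Longrightarrow>
     \<exists>G H. openin X G \<and> G \<noteq> {} \<and> G \<subseteq> U \<and> openin Y H \<and> H \<noteq> {} \<and> H \<subseteq> V \<and>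
        (\<forall>x\<in>G. \<forall>y\<in>H. dist (f (x, y)) (f (x0, y0)) < e)"
  shows "quasicontinuous_at (prod_topology X Y) f (x0, y0)"
  unfolding quasicontinuous_at_def
proof (intro allI impI)
  fix B W assume BW: "openin (prod_topology X Y) B \<and> (x0, y0) \<in> B \<and> open W \<and> f (x0, y0) \<in> W"
  then obtain U V where UV: "openin X U" "openin Y V" "x0 \<in> U" "y0 \<in> V" "U \<times> V \<subseteq> B"
    using openin_prod_topology_alt[of X Y B] by meson
  obtain e where e: "e > 0" "ball (f (x0, y0)) e \<subseteq> W"
    using BW open_contains_ball by blast
  obtain G H where GH: "openin X G" "G \<noteq> {}" "G \<subseteq> U" "openin Y H" "H \<noteq> {}" "H \<subseteq> V"
    and close: "\<forall>x\<in>G. \<forall>y\<in>H. dist (f (x, y)) (f (x0, y0)) < e"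
    using boxes[OF UV(1-4) e(1)] by blast
  have "f ` (G \<times> H) \<subseteq> W"
    using close e(2) by (force simp: dist_commute)
  moreover have "openin (prod_topology X Y) (G \<times> H)" "G \<times> H \<noteq> {}" "G \<times> H \<subseteq> B"
    using GH UV(5) by (auto simp: openin_prod_Times_iff)
  ultimately show "\<exists>V. openin (prod_topology X Y) V \<and> V \<noteq> {} \<and> V \<subseteq> B \<and> f ` V \<subseteq> W"
    by blast
qed

lemma pseudobase_cover:
  fixes f :: "'a \<times> 'b \<Rightarrow> 'c::metric_space"
  assumes pb: "pseudobase (subtopology Y V) \<P>" and V: "openin Y V" "y1 \<in> V"
    and qc: "\<forall>x\<in>S. quasicontinuous_at Y (\<lambda>y. f (x, y)) y1"
    and near: "\<forall>x\<in>S. dist (f (x, y1)) c < b" and r: "r > 0"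
  shows "S \<subseteq> (\<Union>P\<in>\<P>. {x. \<forall>y\<in>P. dist (f (x, y)) c \<le> b + r})"
proof
  fix x assume x: "x \<in> S"
  obtain P where P: "P \<in> \<P>" "\<forall>y\<in>P. dist (f (x, y)) (f (x, y1)) < r"
    using pseudobase_quasicontinuous_select[OF pb V, of "\<lambda>y. f (x, y)" r] qc x r by blast
  have "dist (f (x, y)) c \<le> b + r" if y: "y \<in> P" for y
  proof -
    have "dist (f (x, y)) c \<le> dist (f (x, y)) (f (x, y1)) + dist (f (x, y1)) c"
      by (rule dist_triangle)
    then show ?thesis
      using P(2) y near x by fastforce
  qed
  with P(1) show "x \<in> (\<Union>P\<in>\<P>. {x. \<forall>y\<in>P. dist (f (x, y)) c \<le> b + r})"
    by blast
qed

lemma dense_bound_two_steps: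
  fixes f :: "'a \<times> 'b \<Rightarrow> 'c::metric_space"
  assumes G: "openin X G" "x \<in> G" and H: "openin Y H" "y \<in> H"
    and dense_A: "dense_within X A G" and D: "Y closure_of D = topspace Y"
    and qc_x: "\<forall>s\<in>D. quasicontinuous_at X (\<lambda>x'. f (x', s)) x"
    and qc_y: "quasicontinuous_at Y (\<lambda>y'. f (x, y')) y"
    and bound: "\<forall>x'\<in>A. \<forall>y'\<in>H. dist (f (x', y')) c \<le> a"
  shows "dist (f (x, y)) c \<le> a"
proof -
  have "dist (f (x, s)) c \<le> a" if s: "s \<in> D \<inter> H" for s
  proof -
    have "\<forall>x'\<in>A \<inter> G. dist (f (x', s)) c \<le> a"
      using bound s by blast
    then show ?thesis
      using quasicontinuous_at_dense_bound[OF _ G dense_A] qc_x s by blast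
  qed
  then show ?thesis
    using quasicontinuous_at_dense_bound[OF qc_y H dense_imp_dense_within[OF D]] by blast
qed

lemma box_case_i:
  fixes f :: "'a \<times> 'b \<Rightarrow> 'c::metric_space"
  assumes baire: "Baire_space X"
    and qc_y: "\<forall>x\<in>topspace X. quasicontinuous Y (\<lambda>y. f (x, y))"
    and D: "\<forall>x\<in>topspace X. \<exists>D. D \<subseteq> topspace Y \<and> Y closure_of D = topspace Y \<and>
               (\<forall>y\<in>D. quasicontinuous_at X (\<lambda>x'. f (x', y)) x)"
    and V0: "openin Y V0" "y0 \<in> V0" and \<P>: "countable \<P>" "pseudobase (subtopology Y V0) \<P>"
    and x0: "x0 \<in> topspace X" and U: "openin X U" "x0 \<in> U" and V: "openin Y V" "y0 \<in> V"
    and e: "e > 0"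
  shows "\<exists>G H. openin X G \<and> G \<noteq> {} \<and> G \<subseteq> U \<and> openin Y H \<and> H \<noteq> {} \<and> H \<subseteq> V \<and>
           (\<forall>x\<in>G. \<forall>y\<in>H. dist (f (x, y)) (f (x0, y0)) < e)"
proof -
  define c where "c = f (x0, y0)"
  have e4: "e/4 > 0" and y0: "y0 \<in> topspace Y" "y0 \<in> V \<inter> V0" and VV0: "openin Y (V \<inter> V0)"
    using e V V0 openin_subset by auto
  have "quasicontinuous_at Y (\<lambda>y. f (x0, y)) y0"
    using qc_y x0 y0 unfolding quasicontinuous_def by blast
  then obtain V1 where V1: "openin Y V1" "V1 \<noteq> {}" "V1 \<subseteq> V \<inter> V0" "\<forall>y\<in>V1. dist (f (x0, y)) c < e/4"
    using quasicontinuous_at_dist[OF _ VV0 y0(2) e4] unfolding c_def by blast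
  obtain D0 where D0: "Y closure_of D0 = topspace Y" "\<forall>y\<in>D0. quasicontinuous_at X (\<lambda>x. f (x, y)) x0"
    using D x0 by blast
  obtain y1 where y1: "y1 \<in> V1" "y1 \<in> D0" "y1 \<in> topspace Y"
    using D0(1) V1(1,2) openin_subset unfolding dense_intersects_open by blast
  obtain U1 where U1: "openin X U1" "U1 \<noteq> {}" "U1 \<subseteq> U" "\<forall>x\<in>U1. dist (f (x, y1)) (f (x0, y1)) < e/4"
    using quasicontinuous_at_dist[OF _ U e4] D0(2) y1(2) by blast
  have "dist (f (x, y1)) c < e/2" if "x \<in> U1" for x
    using dist_triangle[of "f (x, y1)" c "f (x0, y1)"] U1(4) V1(4) y1(1) that by fastforce
  moreover have "quasicontinuous_at Y (\<lambda>y. f (x, y)) y1" if "x \<in> U1 \<inter> topspace X" for x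
    using qc_y y1(3) that unfolding quasicontinuous_def by blast
  moreover have pb1: "pseudobase (subtopology Y V1) {P\<in>\<P>. P \<subseteq> V1}"
    using pseudobase_restrict[OF \<P>(2) V1(1)] V1(3) by blast
  ultimately have cover: "U1 \<inter> topspace X \<subseteq> (\<Union>P\<in>{P\<in>\<P>. P \<subseteq> V1}. {x. \<forall>y\<in>P. dist (f (x, y)) c \<le> e/2 + e/4})"
    using pseudobase_cover[OF pb1 V1(1) y1(1) _ _ e4, of "U1 \<inter> topspace X" f c "e/2"] by blast
  have "countable {P\<in>\<P>. P \<subseteq> V1}" "X closure_of topspace X = topspace X"
    "Baire_space (subtopology X (topspace X))"
    using \<P>(1) baire by (simp_all add: closure_of_topspace)
  then obtain P G where P: "P \<in> {P\<in>\<P>. P \<subseteq> V1}" and G: "openin X G" "G \<noteq> {}" "G \<subseteq> U1"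
    and dense_A: "dense_within X {x. \<forall>y\<in>P. dist (f (x, y)) c \<le> e/2 + e/4} G"
    using dense_baire_subspace_localization[OF _ _ _ U1(1,2) cover] by blast
  have H: "openin Y P" "P \<noteq> {}"
    using pseudobase_member[OF \<P>(2) V0(1)] P by simp_all
  have "dist (f (x, y)) c \<le> e/2 + e/4" if x: "x \<in> G" and y: "y \<in> P" for x y
  proof -
    have "x \<in> topspace X" "y \<in> topspace Y"
      using openin_subset[OF G(1)] openin_subset[OF H(1)] x y by auto
    then obtain Dx where "Y closure_of Dx = topspace Y" "\<forall>s\<in>Dx. quasicontinuous_at X (\<lambda>x'. f (x', s)) x"
      and "quasicontinuous_at Y (\<lambda>y'. f (x, y')) y"
      using D qc_y unfolding quasicontinuous_def by blast
    then show ?thesis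
      using dense_bound_two_steps[OF G(1) x H(1) y dense_A] by blast
  qed
  then have "\<forall>x\<in>G. \<forall>y\<in>P. dist (f (x, y)) (f (x0, y0)) < e"
    using e unfolding c_def by fastforce
  moreover have "G \<subseteq> U" "P \<subseteq> V"
    using G(3) U1(3) P V1(3) by auto
  ultimately show ?thesis
    using G(1,2) H by blast
qed

lemma box_case_ii:
  fixes f :: "'a \<times> 'b \<Rightarrow> 'c::metric_space"
  assumes qc_x: "\<forall>y\<in>topspace Y. quasicontinuous X (\<lambda>x. f (x, y))"
    and Q: "X closure_of Q = topspace X" "Baire_space (subtopology X Q)"
      "\<forall>x\<in>Q. quasicontinuous_at Y (\<lambda>y. f (x, y)) y0"
    and V0: "openin Y V0" "y0 \<in> V0" and \<P>: "countable \<P>" "pseudobase (subtopology Y V0) \<P>"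
    and x0: "x0 \<in> topspace X" and U: "openin X U" "x0 \<in> U" and V: "openin Y V" "y0 \<in> V"
    and e: "e > 0"
  shows "\<exists>G H. openin X G \<and> G \<noteq> {} \<and> G \<subseteq> U \<and> openin Y H \<and> H \<noteq> {} \<and> H \<subseteq> V \<and>
           (\<forall>x\<in>G. \<forall>y\<in>H. dist (f (x, y)) (f (x0, y0)) < e)"
proof -
  define c where "c = f (x0, y0)"
  have e4: "e/4 > 0" and y0: "y0 \<in> topspace Y" "y0 \<in> V \<inter> V0" and VV0: "openin Y (V \<inter> V0)"
    using e V V0 openin_subset by auto
  have "quasicontinuous_at X (\<lambda>x. f (x, y0)) x0"
    using qc_x x0 y0 unfolding quasicontinuous_def by blast
  then obtain U1 where U1: "openin X U1" "U1 \<noteq> {}" "U1 \<subseteq> U" "\<forall>x\<in>U1. dist (f (x, y0)) c < e/4"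
    using quasicontinuous_at_dist[OF _ U e4] unfolding c_def by blast
  have pb1: "pseudobase (subtopology Y (V \<inter> V0)) {P\<in>\<P>. P \<subseteq> V \<inter> V0}"
    using pseudobase_restrict[OF \<P>(2) VV0] by blast
  have cover: "U1 \<inter> Q \<subseteq> (\<Union>P\<in>{P\<in>\<P>. P \<subseteq> V \<inter> V0}. {x. \<forall>y\<in>P. dist (f (x, y)) c \<le> e/4 + e/4})"
    using pseudobase_cover[OF pb1 VV0 y0(2) _ _ e4, of "U1 \<inter> Q" f c "e/4"] U1(4) Q(3) by blast
  have "countable {P\<in>\<P>. P \<subseteq> V \<inter> V0}"
    using \<P>(1) by simp
  then obtain P G where P: "P \<in> {P\<in>\<P>. P \<subseteq> V \<inter> V0}" and G: "openin X G" "G \<noteq> {}" "G \<subseteq> U1"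
    and dense_A: "dense_within X {x. \<forall>y\<in>P. dist (f (x, y)) c \<le> e/4 + e/4} G"
    using dense_baire_subspace_localization[OF Q(1,2) _ U1(1,2) cover] by blast
  have H: "openin Y P" "P \<noteq> {}"
    using pseudobase_member[OF \<P>(2) V0(1)] P by simp_all
  have "dist (f (x, y)) c \<le> e/4 + e/4" if x: "x \<in> G" and y: "y \<in> P" for x y
  proof -
    have "x \<in> topspace X" "y \<in> topspace Y"
      using openin_subset[OF G(1)] openin_subset[OF H(1)] x y by auto
    then have "quasicontinuous_at X (\<lambda>x. f (x, y)) x"
      using qc_x unfolding quasicontinuous_def by blast
    then show ?thesis
      using quasicontinuous_at_dense_bound[OF _ G(1) x dense_A] y by blast
  qed
  then have "\<forall>x\<in>G. \<forall>y\<in>P. dist (f (x, y)) (f (x0, y0)) < e"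
    using e unfolding c_def by fastforce
  moreover have "G \<subseteq> U" "P \<subseteq> V"
    using G(3) U1(3) P by auto
  ultimately show ?thesis
    using G(1,2) H by blast
qed

theorem theorem4p3:
  fixes X :: "'a topology" and Y :: "'b topology"
    and f :: "'a \<times> 'b \<Rightarrow> 'c::metric_space"
  assumes baire: "Baire_space X"
    and pb: "\<forall>y\<in>topspace Y. \<exists>N. (\<exists>V. openin Y V \<and> y \<in> V \<and> V \<subseteq> N) \<and> N \<subseteq> topspace Y \<and>
               (\<exists>\<P>. countable \<P> \<and> pseudobase (subtopology Y N) \<P>)"
    and cases:
      "(\<forall>x\<in>topspace X. quasicontinuous Y (\<lambda>y. f (x, y)) \<and>
          (\<exists>D. D \<subseteq> topspace Y \<and> Y closure_of D = topspace Y \<and>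
               (\<forall>y\<in>D. quasicontinuous_at X (\<lambda>x'. f (x', y)) x)))
       \<or>
       (\<forall>y\<in>topspace Y. quasicontinuous X (\<lambda>x. f (x, y)) \<and>
          (\<exists>Q. Q \<subseteq> topspace X \<and> X closure_of Q = topspace X \<and> Baire_space (subtopology X Q) \<and>
               (\<forall>x\<in>Q. quasicontinuous_at Y (\<lambda>y'. f (x, y')) y)))"
  shows "quasicontinuous (prod_topology X Y) f"
  unfolding quasicontinuous_def
proof (clarsimp)
  fix x0 y0 assume x0: "x0 \<in> topspace X" and y0: "y0 \<in> topspace Y"
  obtain V0 \<P> where V0: "openin Y V0" "y0 \<in> V0" and \<P>: "countable \<P>" "pseudobase (subtopology Y V0) \<P>"
    by (rule local_countable_pseudobase[OF bspec[OF pb y0]])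
  show "quasicontinuous_at (prod_topology X Y) f (x0, y0)"
  proof (rule quasicontinuous_at_prod_boxI)
    fix U V and e :: real
    assume U: "openin X U" and V: "openin Y V" and x0U: "x0 \<in> U" and y0V: "y0 \<in> V" and e: "e > 0"
    from cases show "\<exists>G H. openin X G \<and> G \<noteq> {} \<and> G \<subseteq> U \<and> openin Y H \<and> H \<noteq> {} \<and> H \<subseteq> V \<and>
        (\<forall>x\<in>G. \<forall>y\<in>H. dist (f (x, y)) (f (x0, y0)) < e)"
    proof
      assume case_i: "\<forall>x\<in>topspace X. quasicontinuous Y (\<lambda>y. f (x, y)) \<and> (\<exists>D. D \<subseteq> topspace Y \<and>
          Y closure_of D = topspace Y \<and> (\<forall>y\<in>D. quasicontinuous_at X (\<lambda>x'. f (x', y)) x))"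
      then have "\<forall>x\<in>topspace X. quasicontinuous Y (\<lambda>y. f (x, y))"
        "\<forall>x\<in>topspace X. \<exists>D. D \<subseteq> topspace Y \<and> Y closure_of D = topspace Y \<and>
           (\<forall>y\<in>D. quasicontinuous_at X (\<lambda>x'. f (x', y)) x)"
        by blast+
      then show ?thesis
        by (rule box_case_i[OF baire _ _ V0 \<P> x0 U x0U V y0V e])
    next
      assume case_ii: "\<forall>y\<in>topspace Y. quasicontinuous X (\<lambda>x. f (x, y)) \<and> (\<exists>Q. Q \<subseteq> topspace X \<and>
          X closure_of Q = topspace X \<and> Baire_space (subtopology X Q) \<and>
          (\<forall>x\<in>Q. quasicontinuous_at Y (\<lambda>y'. f (x, y')) y))"
      then obtain Q where Q: "X closure_of Q = topspace X" "Baire_space (subtopology X Q)"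
        "\<forall>x\<in>Q. quasicontinuous_at Y (\<lambda>y. f (x, y)) y0"
        using y0 by blast
      have "\<forall>y\<in>topspace Y. quasicontinuous X (\<lambda>x. f (x, y))"
        using case_ii by blast
      then show ?thesis
        by (rule box_case_ii[OF _ Q V0 \<P> x0 U x0U V y0V e])
    qed
  qed
qed

end
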